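(* Let $\Phi\colon\mathbb{R}^d\to\mathbb{R}$ be a continuously differentiable convex function with $(L_\Phi,v)$-Hölder continuous gradient ($\|\nabla\Phi(y)-\nabla\Phi(x)\|\le L_\Phi\|y-x\|^v$ for all $x,y$, with $L_\Phi>0$, $v\in(0,1]$), let $h\colon\mathbb{R}^d\to\mathbb{R}$ be an $L_h$-Lipschitz continuous convex function, and let $f=\Phi+h$. Assume $f$ has a minimizer $x^*$ over $\mathbb{R}^d$, with $f^*=f(x^* )$. Let $g_h(x)\in\partial h(x)$ be an arbitrary subgradient, and consider the iteration $$x_{k+1}=x_k-\alpha_k\frac{\nabla\Phi(x_k)+g_h(x_k)}{\|\nabla\Phi(x_k)+g_h(x_k)\|}$$ from $x_0\in\mathbb{R}^d$, with constant step size $\alpha_k=\|x_0-x^*\|/\sqrt{T+1}$ for a fixed $T\ge0$. Then $$\min_{k=0,\dots,T}\{f(x_k)-f^*\}\le\frac{L_\Phi\|x_0-x^*\|^{v+1}}{(v+1)(T+1)^{(v+1)/2}}+\frac{2L_h\|x_0-x^*\|}{\sqrt{T+1}}.$$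
   Context: $\partial h(x)=\{g: h(y)\ge h(x)+g^T(y-x)\ \forall y\in\mathbb{R}^d\}$. The iteration is well-defined until a minimizer is found (the denominator vanishes only at a minimizer, in which case the bound holds trivially). *)

theory Defs
  imports "HOL-Analysis.Analysis"
begin

definition subdifferential :: "('a::real_inner \<Rightarrow> real) \<Rightarrow> 'a \<Rightarrow> 'a set" where
  "subdifferential h x = {g. \<forall>y. h y \<ge> h x + g \<bullet> (y - x)}"

end

theory Submission
  imports Defs
begin

text \<open>
  Write \<open>g\<^sub>k = \<nabla>\<Phi>(x\<^sub>k) + g\<^sub>h(x\<^sub>k)\<close>, a subgradient of \<open>f\<close> at \<open>x\<^sub>k\<close>, and
  \<open>w\<^sub>k = g\<^sub>k \<bullet> (x\<^sub>k - x\<^sup>*) / \<parallel>g\<^sub>k\<parallel>\<close> for the distance from \<open>x\<^sup>*\<close> to the hyperplane through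
  \<open>x\<^sub>k\<close> orthogonal to \<open>g\<^sub>k\<close>. Expanding \<open>\<parallel>x\<^sub>k\<^sub>+\<^sub>1 - x\<^sup>*\<parallel>\<^sup>2\<close> and telescoping shows that
  some \<open>w\<^sub>k\<close> with \<open>k \<le> T\<close> is at most the step size \<open>\<alpha>\<close>. The projection \<open>y\<close> of \<open>x\<^sup>*\<close>
  onto that hyperplane satisfies \<open>f(x\<^sub>k) \<le> f(y)\<close> by the subgradient inequality, while
  \<open>f(y) - f\<^sup>* \<le> L\<^sub>\<Phi>/(v+1) \<parallel>y - x\<^sup>*\<parallel>\<^bsup>v+1\<^esup> + 2 L\<^sub>h \<parallel>y - x\<^sup>*\<parallel>\<close> by the H\<ouml>lder descent
  inequality for \<open>\<Phi>\<close>, the optimality bound \<open>\<parallel>\<nabla>\<Phi>(x\<^sup>*)\<parallel> \<le> L\<^sub>h\<close> and the Lipschitz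
  continuity of \<open>h\<close>.
\<close>

lemma has_real_derivative_along_line:
  fixes \<Phi> :: "'a::real_inner \<Rightarrow> real"
  assumes "(\<Phi> has_derivative (\<lambda>u. G \<bullet> u)) (at (x + t *\<^sub>R d))"
  shows "((\<lambda>t. \<Phi> (x + t *\<^sub>R d)) has_real_derivative G \<bullet> d) (at t within S)"
proof -
  have "((\<lambda>t. x + t *\<^sub>R d) has_derivative (\<lambda>s. s *\<^sub>R d)) (at t within S)"
    by (auto intro!: derivative_eq_intros)
  from has_derivative_compose[OF this assms]
  show ?thesis by (simp add: has_field_derivative_def mult.commute[of _ "G \<bullet> d"])
qed

lemma has_real_derivative_le_of_secant_bound:
  fixes \<phi> :: "real \<Rightarrow> real"
  assumes deriv: "(\<phi> has_real_derivative l) (at 0)"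
    and bound: "\<And>t. 0 < t \<Longrightarrow> t < 1 \<Longrightarrow> \<phi> t \<le> \<phi> 0 + t * c"
  shows "l \<le> c"
proof (rule ccontr)
  assume "\<not> l \<le> c"
  moreover have "((\<lambda>t. \<phi> t - t * c) has_real_derivative l - c) (at 0)"
    using deriv by (auto intro!: derivative_eq_intros)
  ultimately obtain e where "e > 0" and e: "\<And>t. 0 < t \<Longrightarrow> t < e \<Longrightarrow> \<phi> 0 < \<phi> t - t * c"
    using DERIV_pos_inc_right[of "\<lambda>t. \<phi> t - t * c" "l - c" 0] by auto
  define t where "t = min e 1 / 2"
  have "0 < t" "t < e" "t < 1" using \<open>e > 0\<close> by (auto simp: t_def)
  then show False using e bound by fastforce
qed

lemma convex_on_gradient_inequality:
  fixes \<Phi> :: "'a::real_inner \<Rightarrow> real"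
  assumes deriv: "(\<Phi> has_derivative (\<lambda>u. G \<bullet> u)) (at x)"
    and convex: "convex_on UNIV \<Phi>"
  shows "\<Phi> x + G \<bullet> (y - x) \<le> \<Phi> y"
proof -
  have "G \<bullet> (y - x) \<le> \<Phi> y - \<Phi> x"
  proof (rule has_real_derivative_le_of_secant_bound)
    show "((\<lambda>t. \<Phi> (x + t *\<^sub>R (y - x))) has_real_derivative G \<bullet> (y - x)) (at 0)"
      using has_real_derivative_along_line[of \<Phi> G x 0] deriv by simp
  next
    fix t :: real assume "0 < t" "t < 1"
    moreover have "x + t *\<^sub>R (y - x) = (1 - t) *\<^sub>R x + t *\<^sub>R y"
      by (simp add: algebra_simps)
    ultimately show "\<Phi> (x + t *\<^sub>R (y - x)) \<le> \<Phi> (x + 0 *\<^sub>R (y - x)) + t * (\<Phi> y - \<Phi> x)"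
      using convex_onD[OF convex, of t x y] by (simp add: algebra_simps)
  qed
  then show ?thesis by simp
qed

lemma holder_descent_inequality:
  fixes \<Phi> :: "'a::real_inner \<Rightarrow> real"
  assumes deriv: "\<And>y. (\<Phi> has_derivative (\<lambda>u. G y \<bullet> u)) (at y)"
    and v: "0 < v"
    and holder: "\<And>y z. norm (G z - G y) \<le> L * norm (z - y) powr v"
  shows "\<Phi> y \<le> \<Phi> x + G x \<bullet> (y - x) + L / (v + 1) * norm (y - x) powr (v + 1)"
proof -
  define d where "d = y - x"
  define C where "C = L * norm d powr (v + 1)"
  define \<psi> where "\<psi> t = \<Phi> (x + t *\<^sub>R d) - t * (G x \<bullet> d) - C / (v + 1) * t powr (v + 1)" for t
  have line: "((\<lambda>t. \<Phi> (x + t *\<^sub>R d)) has_real_derivative G (x + t *\<^sub>R d) \<bullet> d) (at t)" for t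
    by (rule has_real_derivative_along_line[OF deriv])
  have "\<psi> 1 \<le> \<psi> 0"
  proof (rule DERIV_nonpos_imp_decreasing_open[of 0 1 \<psi>])
    have "continuous_on {0..1} (\<lambda>t. \<Phi> (x + t *\<^sub>R d))"
      using line by (meson DERIV_continuous continuous_at_imp_continuous_on)
    then show "continuous_on {0..1} \<psi>"
      unfolding \<psi>_def using v by (intro continuous_intros continuous_on_powr') auto
  next
    fix t :: real assume t: "0 < t" "t < 1"
    have "((\<lambda>t. t powr (v + 1)) has_real_derivative (v + 1) * t powr v) (at t)"
      using has_real_derivative_powr[of t "v + 1"] t by simp
    then have "(\<psi> has_real_derivative
        G (x + t *\<^sub>R d) \<bullet> d - 1 * (G x \<bullet> d) - C / (v + 1) * ((v + 1) * t powr v)) (at t)"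
      unfolding \<psi>_def by (intro DERIV_diff DERIV_cmult DERIV_cmult_right line DERIV_ident)
    then have "(\<psi> has_real_derivative (G (x + t *\<^sub>R d) - G x) \<bullet> d - C * t powr v) (at t)"
      using v by (simp add: inner_diff_left)
    moreover have "(G (x + t *\<^sub>R d) - G x) \<bullet> d \<le> C * t powr v"
    proof -
      have "(G (x + t *\<^sub>R d) - G x) \<bullet> d \<le> norm (G (x + t *\<^sub>R d) - G x) * norm d"
        by (rule norm_cauchy_schwarz)
      also have "\<dots> \<le> L * norm (t *\<^sub>R d) powr v * norm d"
        using holder[of "x + t *\<^sub>R d" x] by (intro mult_right_mono) simp_all
      also have "\<dots> = C * t powr v"
        using t unfolding C_def by (simp add: powr_mult powr_add)
      finally show ?thesis .
    qed
    ultimately show "\<exists>l. (\<psi> has_real_derivative l) (at t) \<and> l \<le> 0"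
      by force
  qed simp
  then show ?thesis unfolding \<psi>_def by (simp add: C_def d_def)
qed

lemma normalized_steps_small_residual:
  fixes x u :: "nat \<Rightarrow> 'a::real_inner"
  assumes step: "\<And>k. k < n \<Longrightarrow> x (Suc k) = x k - \<alpha> *\<^sub>R u k"
    and unit: "\<And>k. k < n \<Longrightarrow> norm (u k) = 1"
    and "0 < n"
  shows "\<exists>k<n. 2 * \<alpha> * ((x k - c) \<bullet> u k) \<le> norm (x 0 - c)^2 / n + \<alpha>^2"
proof -
  define r where "r k = (x k - c) \<bullet> u k" for k
  have dist: "norm (x m - c)^2 = norm (x 0 - c)^2 - 2 * \<alpha> * (\<Sum>k<m. r k) + real m * \<alpha>^2"
    if "m \<le> n" for m
    using that
  proof (induction m)
    case (Suc m)
    have "norm (x (Suc m) - c)^2 = norm ((x m - c) - \<alpha> *\<^sub>R u m)^2"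
      using step[of m] Suc.prems by (simp add: diff_diff_eq add.commute)
    also have "\<dots> = norm (x m - c)^2 - 2 * \<alpha> * r m + \<alpha>^2"
      using unit[of m] Suc.prems unfolding r_def power2_norm_eq_inner
      by (simp add: norm_eq_1 inner_diff_left inner_diff_right inner_commute algebra_simps power2_eq_square)
    finally show ?case using Suc by (simp add: algebra_simps)
  qed simp
  have sum: "2 * \<alpha> * (\<Sum>k<n. r k) \<le> norm (x 0 - c)^2 + real n * \<alpha>^2"
    using dist[of n] zero_le_power2[of "norm (x n - c)"] by simp
  show ?thesis
  proof (rule ccontr)
    assume "\<not> ?thesis"
    then have "(\<Sum>k<n. norm (x 0 - c)^2 / n + \<alpha>^2) < (\<Sum>k<n. 2 * \<alpha> * r k)"
      using \<open>0 < n\<close> by (intro sum_strict_mono) (auto simp: r_def not_le)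
    then show False
      using sum \<open>0 < n\<close> by (simp add: sum_distrib_left algebra_simps)
  qed
qed

locale holder_composite_problem =
  fixes \<Phi> h :: "'a::euclidean_space \<Rightarrow> real"
    and G gh :: "'a \<Rightarrow> 'a"
    and L Lh v :: real
    and xs :: 'a
  assumes deriv: "\<And>y. (\<Phi> has_derivative (\<lambda>u. G y \<bullet> u)) (at y)"
    and convex_\<Phi>: "convex_on UNIV \<Phi>"
    and v_pos: "0 < v"
    and holder: "\<And>y z. norm (G z - G y) \<le> L * norm (z - y) powr v"
    and lipschitz_h: "Lh-lipschitz_on UNIV h"
    and minimizer: "\<And>y. \<Phi> xs + h xs \<le> \<Phi> y + h y"
    and subgrad: "\<And>y. gh y \<in> subdifferential h y"
begin

definition gap_bound :: "real \<Rightarrow> real" where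
  "gap_bound r = L / (v + 1) * r powr (v + 1) + 2 * Lh * r"

lemma Lh_nonneg: "0 \<le> Lh"
  using lipschitz_h by (rule lipschitz_on_nonneg)

lemma L_nonneg: "0 \<le> L"
proof -
  define e :: 'a where "e = (SOME i. i \<in> Basis)"
  have "0 \<le> norm (G (xs + e) - G xs)" by simp
  also have "\<dots> \<le> L" using holder[where y = xs and z = "xs + e"] norm_some_Basis by (simp add: e_def)
  finally show ?thesis .
qed

lemma gap_bound_mono: "0 \<le> r \<Longrightarrow> r \<le> s \<Longrightarrow> gap_bound r \<le> gap_bound s"
  unfolding gap_bound_def using L_nonneg Lh_nonneg v_pos
  by (intro add_mono mult_left_mono[of "_ powr _"] powr_mono2 mult_left_mono[of r]) auto

lemma gap_bound_nonneg: "0 \<le> r \<Longrightarrow> 0 \<le> gap_bound r"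
  using gap_bound_mono[of 0 r] v_pos by (simp add: gap_bound_def)

lemma subgradient_of_sum: "G z + gh z \<in> subdifferential (\<lambda>y. \<Phi> y + h y) z"
proof -
  have h_sub: "h z + gh z \<bullet> (y - z) \<le> h y" for y
    using subgrad[of z] by (simp add: subdifferential_def)
  have "\<Phi> z + h z + (G z + gh z) \<bullet> (y - z) \<le> \<Phi> y + h y" for y
    using add_mono[OF convex_on_gradient_inequality[OF deriv convex_\<Phi>, of z y] h_sub[of y]]
    by (simp add: inner_add_left algebra_simps)
  then show ?thesis
    unfolding subdifferential_def by auto
qed

lemma lipschitz_h_diff_le: "h y - h z \<le> Lh * norm (y - z)"
  using lipschitz_onD[OF lipschitz_h, of y z] by (simp add: dist_real_def dist_norm)

lemma norm_gradient_at_minimizer_le: "norm (G xs) \<le> Lh"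
proof -
  define p where "p = G xs"
  have "p \<bullet> p \<le> Lh * norm p"
  proof (rule has_real_derivative_le_of_secant_bound)
    have "((\<lambda>t. \<Phi> (xs + t *\<^sub>R - p)) has_real_derivative p \<bullet> - p) (at 0)"
      using has_real_derivative_along_line[of \<Phi> p xs 0 "- p"] deriv[of xs] by (simp add: p_def)
    then show "((\<lambda>t. - \<Phi> (xs + t *\<^sub>R - p)) has_real_derivative p \<bullet> p) (at 0)"
      using DERIV_minus by fastforce
  next
    fix t :: real assume "0 < t"
    then have "h (xs + t *\<^sub>R - p) - h xs \<le> t * (Lh * norm p)"
      using lipschitz_h_diff_le[of "xs + t *\<^sub>R - p" xs] by (simp add: mult.left_commute)
    then show "- \<Phi> (xs + t *\<^sub>R - p) \<le> - \<Phi> (xs + 0 *\<^sub>R - p) + t * (Lh * norm p)"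
      using minimizer[of "xs + t *\<^sub>R - p"] by simp
  qed
  then have "norm p * norm p \<le> Lh * norm p"
    by (simp add: power2_norm_eq_inner[symmetric] power2_eq_square)
  then show ?thesis
    using Lh_nonneg mult_le_cancel_right_pos[of "norm p" "norm p" Lh] unfolding p_def
    by (cases "G xs = 0") auto
qed

lemma gap_le_gap_bound: "\<Phi> y + h y - (\<Phi> xs + h xs) \<le> gap_bound (norm (y - xs))"
proof -
  have "\<Phi> y \<le> \<Phi> xs + G xs \<bullet> (y - xs) + L / (v + 1) * norm (y - xs) powr (v + 1)"
    by (rule holder_descent_inequality[OF deriv v_pos holder])
  moreover have "G xs \<bullet> (y - xs) \<le> Lh * norm (y - xs)"
    using norm_cauchy_schwarz[of "G xs" "y - xs"] norm_gradient_at_minimizer_le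
    by (meson mult_right_mono norm_ge_zero order_trans)
  moreover have "h y - h xs \<le> Lh * norm (y - xs)"
    by (rule lipschitz_h_diff_le)
  ultimately show ?thesis
    unfolding gap_bound_def by simp
qed

lemma gap_le_gap_bound_hyperplane_distance:
  assumes "G z + gh z \<noteq> 0"
  defines "w \<equiv> (G z + gh z) \<bullet> (z - xs) / norm (G z + gh z)"
  shows "0 \<le> w" and "\<Phi> z + h z - (\<Phi> xs + h xs) \<le> gap_bound w"
proof -
  define g where "g = G z + gh z"
  have g: "0 < norm g" using assms(1) by (simp add: g_def)
  have sub: "\<Phi> z + h z + g \<bullet> (y - z) \<le> \<Phi> y + h y" for y
    using subgradient_of_sum[of z] by (simp add: subdifferential_def g_def)
  show w: "0 \<le> w"
    using sub[of xs] minimizer[of z] g by (simp add: w_def g_def[symmetric] inner_diff_right)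
  \<comment> \<open>the projection of xs onto the hyperplane through z orthogonal to g\<close>
  define y where "y = xs + (w / norm g) *\<^sub>R g"
  have "g \<bullet> (y - z) = 0"
    using g by (simp add: y_def w_def g_def[symmetric] inner_diff_right inner_add_right
        power2_norm_eq_inner[symmetric] power2_eq_square)
  then have "\<Phi> z + h z \<le> \<Phi> y + h y" using sub[of y] by simp
  moreover have "norm (y - xs) = w" using g w by (simp add: y_def)
  ultimately show "\<Phi> z + h z - (\<Phi> xs + h xs) \<le> gap_bound w"
    using gap_le_gap_bound[of y] by simp
qed

lemma normalized_subgradient_method_gap:
  fixes x :: "nat \<Rightarrow> 'a"
  assumes iter: "\<And>k. x (Suc k) = x k - \<alpha> *\<^sub>R ((1 / norm (G (x k) + gh (x k))) *\<^sub>R (G (x k) + gh (x k)))"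
    and \<alpha>: "\<alpha> = norm (x 0 - xs) / sqrt (real T + 1)"
  shows "\<exists>k\<le>T. \<Phi> (x k) + h (x k) - (\<Phi> xs + h xs) \<le> gap_bound \<alpha>"
proof -
  have \<alpha>_nonneg: "0 \<le> \<alpha>" using \<alpha> by simp
  consider (stationary) k where "k \<le> T" "G (x k) + gh (x k) = 0"
    | (start) "x 0 = xs"
    | (regular) "\<And>k. k \<le> T \<Longrightarrow> G (x k) + gh (x k) \<noteq> 0" "0 < \<alpha>"
    using \<alpha> by force
  then show ?thesis
  proof cases
    case stationary
    \<comment> \<open>a zero subgradient certifies optimality (the step there is the junk value \<open>1 / 0 = 0\<close>)\<close>
    then have "\<Phi> (x k) + h (x k) \<le> \<Phi> xs + h xs"
      using subgradient_of_sum[of "x k"] by (simp add: subdifferential_def)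
    then show ?thesis using stationary gap_bound_nonneg[OF \<alpha>_nonneg] by auto
  next
    case start
    then show ?thesis using gap_bound_nonneg[OF \<alpha>_nonneg] by auto
  next
    case regular
    define u where "u k = (1 / norm (G (x k) + gh (x k))) *\<^sub>R (G (x k) + gh (x k))" for k
    have "norm (x 0 - xs)^2 / Suc T = \<alpha>^2"
      using \<alpha> by (simp add: power_divide)
    then obtain k where k: "k < Suc T" and "2 * \<alpha> * ((x k - xs) \<bullet> u k) \<le> 2 * \<alpha> * \<alpha>"
      using normalized_steps_small_residual[of "Suc T" x \<alpha> u xs] regular(1)
      by (auto simp: iter u_def power2_eq_square)
    then have "(x k - xs) \<bullet> u k \<le> \<alpha>"
      using regular(2) by simp
    then have "gap_bound ((G (x k) + gh (x k)) \<bullet> (x k - xs) / norm (G (x k) + gh (x k))) \<le> gap_bound \<alpha>"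
      using gap_le_gap_bound_hyperplane_distance(1)[of "x k"] regular(1) k
      by (intro gap_bound_mono) (auto simp: u_def inner_commute)
    moreover have "k \<le> T" using k by simp
    ultimately show ?thesis
      using gap_le_gap_bound_hyperplane_distance(2)[of "x k"] regular(1) by (blast intro: order_trans)
  qed
qed

end

theorem corollary2p4:
  fixes \<Phi> h :: "'a::euclidean_space \<Rightarrow> real"
    and grad\<Phi> gh :: "'a \<Rightarrow> 'a"
    and L\<Phi> Lh v :: real
    and xs :: 'a
    and x :: "nat \<Rightarrow> 'a"
    and T :: nat
  assumes deriv: "\<And>y. (\<Phi> has_derivative (\<lambda>u. grad\<Phi> y \<bullet> u)) (at y)"
    and cont_grad: "continuous_on UNIV grad\<Phi>"
    and conv\<Phi>: "convex_on UNIV \<Phi>"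
    and L\<Phi>_pos: "L\<Phi> > 0"
    and v_range: "0 < v" "v \<le> 1"
    and holder: "\<And>y z. norm (grad\<Phi> z - grad\<Phi> y) \<le> L\<Phi> * norm (z - y) powr v"
    and lip_h: "Lh-lipschitz_on UNIV h"
    and conv_h: "convex_on UNIV h"
    and minimizer: "\<And>y. \<Phi> xs + h xs \<le> \<Phi> y + h y"
    and subgrad: "\<And>y. gh y \<in> subdifferential h y"
    and iter: "\<And>k. x (Suc k) = x k - (norm (x 0 - xs) / sqrt (real T + 1)) *\<^sub>R
                 ((1 / norm (grad\<Phi> (x k) + gh (x k))) *\<^sub>R (grad\<Phi> (x k) + gh (x k)))"
  shows "Min ((\<lambda>k. (\<Phi> (x k) + h (x k)) - (\<Phi> xs + h xs)) ` {0..T})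
           \<le> L\<Phi> * norm (x 0 - xs) powr (v + 1) / ((v + 1) * (real T + 1) powr ((v + 1) / 2))
             + 2 * Lh * norm (x 0 - xs) / sqrt (real T + 1)"
proof -
  interpret holder_composite_problem \<Phi> h grad\<Phi> gh L\<Phi> Lh v xs
    using deriv conv\<Phi> v_range(1) holder lip_h minimizer subgrad by unfold_locales
  define \<alpha> where "\<alpha> = norm (x 0 - xs) / sqrt (real T + 1)"
  obtain k where k: "k \<le> T" and gap: "\<Phi> (x k) + h (x k) - (\<Phi> xs + h xs) \<le> gap_bound \<alpha>"
    using normalized_subgradient_method_gap[of x \<alpha> T] iter by (auto simp: \<alpha>_def)
  have "\<alpha> powr (v + 1) = norm (x 0 - xs) powr (v + 1) / (real T + 1) powr ((v + 1) / 2)"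
    by (simp add: \<alpha>_def powr_divide powr_half_sqrt[symmetric] powr_powr)
  then have "gap_bound \<alpha> = L\<Phi> * norm (x 0 - xs) powr (v + 1) / ((v + 1) * (real T + 1) powr ((v + 1) / 2))
      + 2 * Lh * norm (x 0 - xs) / sqrt (real T + 1)"
    by (simp add: gap_bound_def \<alpha>_def)
  moreover have "Min ((\<lambda>k. (\<Phi> (x k) + h (x k)) - (\<Phi> xs + h xs)) ` {0..T})
      \<le> \<Phi> (x k) + h (x k) - (\<Phi> xs + h xs)"
    using k by (intro Min_le) auto
  ultimately show ?thesis
    using gap by linarith
qed

end
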